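(* Let $A\in\mathbf{R}^{n\times n}$, $C_j\in\mathbf{R}^{m_j\times n}$ ($j=1,\ldots,N$), $H\in\mathbf{R}^{p\times n}$, and let $\mathcal{L}$ be the Laplacian of a directed graph $\mathbf{G}$ on $N$ nodes which has a spanning tree with root node $i$. Set $\bar A=I_N\otimes A$, $\bar C=\mathrm{diag}[C_1,\ldots,C_N]$, $\bar H=\mathcal{L}\otimes H$. Suppose $(C_i,A)$ is detectable and $\mathcal{O}_H\cap\mathcal{C}_j=\{0\}$ for all $j=1,\ldots,N$, where $\mathcal{C}_j$ is the undetectable subspace of $(C_j,A)$ and $\mathcal{O}_H=\bigcap_{l=1}^n\operatorname{Ker}(HA^{l-1})$. Then the pair $\left(\begin{bmatrix}\bar C\\ \bar H\end{bmatrix},\bar A\right)$ is detectable.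
   Context: Directed graph on $\{1,\ldots,N\}$ without self-loops; adjacency matrix $\mathbf{A}=[\mathbf{a}_{kl}]$ with $\mathbf{a}_{kl}=1$ if there is an edge from $l$ to $k$, else $0$; $p_k$ the in-degree of node $k$; Laplacian $\mathcal{L}=\mathrm{diag}[p_1,\ldots,p_N]-\mathbf{A}$. A spanning tree rooted at $i$ is a directed tree containing all nodes in which every node is reachable from $i$ by a directed path. For a square matrix $F$ with minimal polynomial $\alpha_F=\alpha_F^-\alpha_F^+$ (zeros of $\alpha_F^-$ in the open left half-plane, of $\alpha_F^+$ in the closed right half-plane), the undetectable subspace of $(G,F)$ is $\bigcap_{l=1}^n\operatorname{Ker}(GF^{l-1})\cap\operatorname{Ker}\alpha_F^+(F)$; the pair is detectable iff this subspace is $\{0\}$. *)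

theory Defs
  imports Complex_Main "HOL-Computational_Algebra.Polynomial" "Jordan_Normal_Form.Matrix"
begin

definition kron :: "'a::times mat \<Rightarrow> 'a mat \<Rightarrow> 'a mat" where
  "kron P Q = mat (dim_row P * dim_row Q) (dim_col P * dim_col Q)
     (\<lambda>(r, c). P $$ (r div dim_row Q, c div dim_col Q) * Q $$ (r mod dim_row Q, c mod dim_col Q))"

text \<open>Vertical stacking [P; Q] (P and Q are assumed to have the same number of columns).\<close>
definition vstack :: "'a mat \<Rightarrow> 'a mat \<Rightarrow> 'a mat" where
  "vstack P Q = mat (dim_row P + dim_row Q) (dim_col P)
     (\<lambda>(r, c). if r < dim_row P then P $$ (r, c) else Q $$ (r - dim_row P, c))"

definition poly_mat :: "'a::comm_ring_1 poly \<Rightarrow> 'a mat \<Rightarrow> 'a mat" where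
  "poly_mat q F = foldr (\<lambda>k M. coeff q k \<cdot>\<^sub>m (F ^\<^sub>m k) + M) [0..<Suc (degree q)]
                      (0\<^sub>m (dim_row F) (dim_row F))"

definition min_poly :: "real mat \<Rightarrow> real poly" where
  "min_poly F = (THE q. lead_coeff q = 1 \<and> poly_mat q F = 0\<^sub>m (dim_row F) (dim_row F) \<and>
     (\<forall>r. r \<noteq> 0 \<and> poly_mat r F = 0\<^sub>m (dim_row F) (dim_row F) \<longrightarrow> degree q \<le> degree r))"

definition alpha_plus :: "real mat \<Rightarrow> complex poly" where
  "alpha_plus F = (let q = map_poly complex_of_real (min_poly F) in
     (\<Prod>z \<in> {z. poly q z = 0 \<and> Re z \<ge> 0}. [:- z, 1:] ^ order z q))"

definition undetectable_subspace :: "real mat \<Rightarrow> real mat \<Rightarrow> real vec set" where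
  "undetectable_subspace G F = {x \<in> carrier_vec (dim_row F).
     (\<forall>l \<in> {1..dim_row F}. (G * F ^\<^sub>m (l - 1)) *\<^sub>v x = 0\<^sub>v (dim_row G)) \<and>
     poly_mat (alpha_plus F) (map_mat complex_of_real F) *\<^sub>v map_vec complex_of_real x
        = 0\<^sub>v (dim_row F)}"

definition detectable :: "real mat \<Rightarrow> real mat \<Rightarrow> bool" where
  "detectable G F \<longleftrightarrow> undetectable_subspace G F = {0\<^sub>v (dim_row F)}"

definition unobservable_subspace :: "real mat \<Rightarrow> real mat \<Rightarrow> real vec set" where
  "unobservable_subspace H F = {x \<in> carrier_vec (dim_row F).
     \<forall>l \<in> {1..dim_row F}. (H * F ^\<^sub>m (l - 1)) *\<^sub>v x = 0\<^sub>v (dim_row H)}"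

text \<open>Nodes are 0..N-1; (l,k) \<in> E means an edge from l to k.\<close>
definition adjacency :: "nat \<Rightarrow> (nat \<times> nat) set \<Rightarrow> real mat" where
  "adjacency N E = mat N N (\<lambda>(k, l). if (l, k) \<in> E then 1 else 0)"

definition in_degree :: "nat \<Rightarrow> (nat \<times> nat) set \<Rightarrow> nat \<Rightarrow> nat" where
  "in_degree N E k = card {l \<in> {0..<N}. (l, k) \<in> E}"

definition laplacian :: "nat \<Rightarrow> (nat \<times> nat) set \<Rightarrow> real mat" where
  "laplacian N E = mat N N (\<lambda>(k, l). if k = l then real (in_degree N E k) else 0)
                   - adjacency N E"

definition has_spanning_tree :: "nat \<Rightarrow> (nat \<times> nat) set \<Rightarrow> nat \<Rightarrow> bool" where
  "has_spanning_tree N E i \<longleftrightarrow> i < N \<and> (\<exists>T \<subseteq> E.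
     (\<forall>l. (l, i) \<notin> T) \<and>
     (\<forall>k < N. k \<noteq> i \<longrightarrow> (\<exists>!l. (l, k) \<in> T)) \<and>
     (\<forall>k < N. (i, k) \<in> T\<^sup>*))"

end

theory Submission
  imports Defs
begin

text \<open>Split a state x of the networked system into its node blocks x_1, ..., x_N. Since
  I_N \<otimes> A acts blockwise and has the same minimal polynomial as A, an undetectable x has every
  block x_j undetectable for (C_j, A), and for each l the vectors y_j = H A^l x_j satisfy
  (\<L> \<otimes> I) y = 0. Detectability of (C_i, A) gives x_i = 0. By a maximum principle, the kernel of
  a Laplacian whose graph has a spanning tree consists of constant vectors, so y_j = y_i = 0 for
  all j; hence x_j lies in O_H \<inter> C_j = {0}.\<close>

definition vec_block :: "nat \<Rightarrow> nat \<Rightarrow> 'a vec \<Rightarrow> 'a vec" where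
  "vec_block n j z = vec n (\<lambda>t. z $ (j * n + t))"

lemma vec_block_carrier [simp]:
  "vec_block n j z \<in> carrier_vec n" "dim_vec (vec_block n j z) = n"
  by (auto simp: vec_block_def)

lemma index_vec_block [simp]: "t < n \<Longrightarrow> vec_block n j z $ t = z $ (j * n + t)"
  by (simp add: vec_block_def)

lemma block_index_less:
  fixes j t :: nat assumes "j < N" "t < n" shows "j * n + t < N * n"
proof -
  have "Suc j * n \<le> N * n" using assms(1) by (intro mult_right_mono) auto
  thus ?thesis using assms(2) by simp
qed

lemma vec_block_map_vec:
  "u \<in> carrier_vec (N * n) \<Longrightarrow> j < N \<Longrightarrow> vec_block n j (map_vec f u) = map_vec f (vec_block n j u)"
  by (intro eq_vecI) (auto simp: block_index_less)

lemma vec_block_zero: "j < N \<Longrightarrow> vec_block n j (0\<^sub>v (N * n)) = 0\<^sub>v n"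
  by (intro eq_vecI) (auto simp: block_index_less)

lemma block_index_div_mod_less:
  fixes s :: nat assumes "s < N * n" shows "s div n < N" "s mod n < n"
proof -
  have "0 < n" using assms by (cases n) auto
  with assms show "s div n < N" "s mod n < n" by (auto simp: less_mult_imp_div_less)
qed

lemma vec_eq_zero_by_blocks:
  assumes u: "u \<in> carrier_vec (N * n)" and blocks: "\<And>j. j < N \<Longrightarrow> vec_block n j u = 0\<^sub>v n"
  shows "u = 0\<^sub>v (N * n)"
proof (rule eq_vecI)
  fix s assume "s < dim_vec (0\<^sub>v (N * n) :: 'a vec)"
  hence s: "s < N * n" by simp
  have "u $ s = vec_block n (s div n) u $ (s mod n)"
    using block_index_div_mod_less[OF s] by simp
  also have "\<dots> = 0" using blocks block_index_div_mod_less[OF s] by simp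
  finally show "u $ s = 0\<^sub>v (N * n) $ s" using s by simp
qed (use u in simp)

lemma vec_block_append_0: "a \<in> carrier_vec n \<Longrightarrow> vec_block n 0 (a @\<^sub>v d) = a"
  by (intro eq_vecI) auto

lemma vec_block_append_Suc:
  assumes "a \<in> carrier_vec n" "d \<in> carrier_vec (L * n)" "j < L"
  shows "vec_block n (Suc j) (a @\<^sub>v d) = vec_block n j d"
  by (intro eq_vecI) (use assms block_index_less[of j L] in auto)

lemma kron_dims [simp]:
  "dim_row (kron P Q) = dim_row P * dim_row Q" "dim_col (kron P Q) = dim_col P * dim_col Q"
  by (auto simp: kron_def)

lemma kron_carrier_mat:
  "P \<in> carrier_mat a b \<Longrightarrow> Q \<in> carrier_mat c d \<Longrightarrow> kron P Q \<in> carrier_mat (a * c) (b * d)"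
  by auto

lemma index_kron:
  "r < dim_row P * dim_row Q \<Longrightarrow> s < dim_col P * dim_col Q \<Longrightarrow>
   kron P Q $$ (r, s) =
     P $$ (r div dim_row Q, s div dim_col Q) * Q $$ (r mod dim_row Q, s mod dim_col Q)"
  by (simp add: kron_def)

lemma sum_lessThan_mult_blocks:
  fixes f :: "nat \<Rightarrow> 'a::comm_monoid_add"
  shows "(\<Sum>s < b * d. f s) = (\<Sum>l < b. \<Sum>t < d. f (l * d + t))"
proof -
  have "(\<Sum>s < b * d. f s) = (\<Sum>l < b. sum f {l * d..<l * d + d})"
    using sum.nat_group[of f d b] by simp
  also have "\<dots> = (\<Sum>l < b. \<Sum>t < d. f (l * d + t))"
  proof (rule sum.cong[OF refl])
    fix l
    have "sum f {0 + l * d..<d + l * d} = (\<Sum>t = 0..<d. f (t + l * d))"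
      by (rule sum.shift_bounds_nat_ivl)
    thus "sum f {l * d..<l * d + d} = (\<Sum>t < d. f (l * d + t))"
      by (simp add: lessThan_atLeast0 add.commute)
  qed
  finally show ?thesis .
qed

lemma kron_mult:
  fixes P Q :: "'a::comm_semiring_1 mat"
  assumes P: "P \<in> carrier_mat a b" and R: "R \<in> carrier_mat b e"
    and Q: "Q \<in> carrier_mat c d" and S: "S \<in> carrier_mat d f"
  shows "kron P Q * kron R S = kron (P * R) (Q * S)"
proof (rule eq_matI)
  fix r s assume "r < dim_row (kron (P * R) (Q * S))" "s < dim_col (kron (P * R) (Q * S))"
  hence r: "r < a * c" and s: "s < e * f" using P R Q S by auto
  note r' = block_index_div_mod_less[OF r] and s' = block_index_div_mod_less[OF s]
  have "(kron P Q * kron R S) $$ (r, s) = (\<Sum>u < b * d. kron P Q $$ (r, u) * kron R S $$ (u, s))"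
    using P R Q S r s by (simp add: scalar_prod_def lessThan_atLeast0)
  also have "\<dots> = (\<Sum>l < b. \<Sum>t < d.
      P $$ (r div c, l) * R $$ (l, s div f) * (Q $$ (r mod c, t) * S $$ (t, s mod f)))"
    unfolding sum_lessThan_mult_blocks
  proof (intro sum.cong refl)
    fix l t assume "l \<in> {..<b}" "t \<in> {..<d}"
    hence "l * d + t < b * d" "(l * d + t) div d = l" "(l * d + t) mod d = t"
      using block_index_less by auto
    thus "kron P Q $$ (r, l * d + t) * kron R S $$ (l * d + t, s)
        = P $$ (r div c, l) * R $$ (l, s div f) * (Q $$ (r mod c, t) * S $$ (t, s mod f))"
      using P R Q S r s by (simp add: index_kron ac_simps)
  qed
  also have "\<dots> = (P * R) $$ (r div c, s div f) * (Q * S) $$ (r mod c, s mod f)"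
    using P R Q S r' s' by (simp add: scalar_prod_def sum_product lessThan_atLeast0)
  also have "\<dots> = kron (P * R) (Q * S) $$ (r, s)"
    using P R Q S r s by (simp add: index_kron)
  finally show "(kron P Q * kron R S) $$ (r, s) = kron (P * R) (Q * S) $$ (r, s)" .
qed (use P R Q S in auto)

lemma kron_one_one: "kron (1\<^sub>m a) (1\<^sub>m b) = (1\<^sub>m (a * b) :: 'a::semiring_1 mat)"
proof (rule eq_matI)
  fix r s assume "r < dim_row (1\<^sub>m (a * b) :: 'a mat)" "s < dim_col (1\<^sub>m (a * b) :: 'a mat)"
  hence r: "r < a * b" and s: "s < a * b" by auto
  have "(r div b = s div b \<and> r mod b = s mod b) = (r = s)"
    by (metis div_mult_mod_eq)
  thus "kron (1\<^sub>m a) (1\<^sub>m b) $$ (r, s) = (1\<^sub>m (a * b) :: 'a mat) $$ (r, s)"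
    using r s block_index_div_mod_less[OF r] block_index_div_mod_less[OF s]
    by (auto simp: index_kron)
qed auto

lemma kron_pow_mat:
  fixes P Q :: "'a::comm_semiring_1 mat"
  assumes P: "P \<in> carrier_mat a a" and Q: "Q \<in> carrier_mat c c"
  shows "kron P Q ^\<^sub>m k = kron (P ^\<^sub>m k) (Q ^\<^sub>m k)"
proof (induction k)
  case 0
  show ?case using P Q by (simp add: kron_one_one)
next
  case (Suc k)
  then show ?case
    using P Q by (simp add: kron_mult[OF pow_carrier_mat[OF P] P pow_carrier_mat[OF Q] Q])
qed

lemma kron_add_right:
  fixes P Q Q' :: "'a::semiring_0 mat" shows
  "Q \<in> carrier_mat c d \<Longrightarrow> Q' \<in> carrier_mat c d \<Longrightarrow> kron P Q + kron P Q' = kron P (Q + Q')"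
  by (intro eq_matI) (auto simp: index_kron block_index_div_mod_less distrib_left)

lemma kron_smult_right:
  fixes P Q :: "'a::comm_semiring_0 mat" shows "x \<cdot>\<^sub>m kron P Q = kron P (x \<cdot>\<^sub>m Q)"
  by (intro eq_matI) (auto simp: index_kron block_index_div_mod_less ac_simps)

lemma kron_zero_right:
  "kron P (0\<^sub>m c d) = (0\<^sub>m (dim_row P * c) (dim_col P * d) :: 'a::semiring_0 mat)"
  by (intro eq_matI) (auto simp: index_kron block_index_div_mod_less)

lemma foldr_smult_pow_carrier_mat:
  "F \<in> carrier_mat n n \<Longrightarrow> foldr (\<lambda>k M. c k \<cdot>\<^sub>m (F ^\<^sub>m k) + M) ks (0\<^sub>m n n) \<in> carrier_mat n n"
  by (induction ks) auto

lemma poly_mat_carrier: "F \<in> carrier_mat n n \<Longrightarrow> poly_mat q F \<in> carrier_mat n n"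
  unfolding poly_mat_def by (simp add: foldr_smult_pow_carrier_mat del: upt_Suc)

lemma one_pow_mat [simp]: "1\<^sub>m n ^\<^sub>m k = (1\<^sub>m n :: 'a::semiring_1 mat)"
  by (induction k) simp_all

lemma poly_mat_kron_one:
  assumes A: "A \<in> carrier_mat n n"
  shows "poly_mat q (kron (1\<^sub>m N) A) = kron (1\<^sub>m N) (poly_mat q A)"
proof -
  have "foldr (\<lambda>k M. coeff q k \<cdot>\<^sub>m (kron (1\<^sub>m N) A ^\<^sub>m k) + M) ks (0\<^sub>m (N * n) (N * n))
      = kron (1\<^sub>m N) (foldr (\<lambda>k M. coeff q k \<cdot>\<^sub>m (A ^\<^sub>m k) + M) ks (0\<^sub>m n n))" for ks
  proof (induction ks)
    case (Cons k ks)
    let ?S = "foldr (\<lambda>k M. coeff q k \<cdot>\<^sub>m (A ^\<^sub>m k) + M) ks (0\<^sub>m n n)"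
    have "?S \<in> carrier_mat n n" by (rule foldr_smult_pow_carrier_mat[OF A])
    moreover have "coeff q k \<cdot>\<^sub>m (A ^\<^sub>m k) \<in> carrier_mat n n" using A by simp
    ultimately show ?case
      using Cons by (simp add: kron_pow_mat[OF one_carrier_mat A] kron_smult_right kron_add_right)
  qed (simp add: kron_zero_right)
  thus ?thesis using A by (simp add: poly_mat_def)
qed

lemma kron_one_eq_zero_iff:
  assumes P: "P \<in> carrier_mat n n" and N: "0 < N"
  shows "kron (1\<^sub>m N) P = 0\<^sub>m (N * n) (N * n) \<longleftrightarrow> P = (0\<^sub>m n n :: 'a::semiring_1 mat)"
proof
  assume zero: "kron (1\<^sub>m N) P = 0\<^sub>m (N * n) (N * n)"
  show "P = 0\<^sub>m n n"
  proof (rule eq_matI)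
    fix r s assume "r < dim_row (0\<^sub>m n n :: 'a mat)" "s < dim_col (0\<^sub>m n n :: 'a mat)"
    hence r: "r < n" and s: "s < n" by auto
    have rs: "r < N * n" "s < N * n"
      using block_index_less[OF N r] block_index_less[OF N s] by simp_all
    have "P $$ (r, s) = kron (1\<^sub>m N) P $$ (r, s)"
      using P N r s rs by (simp add: index_kron)
    thus "P $$ (r, s) = 0\<^sub>m n n $$ (r, s)"
      using zero r s rs by simp
  qed (use P in auto)
qed (simp add: kron_zero_right)

lemma poly_mat_kron_one_eq_zero_iff:
  assumes "A \<in> carrier_mat n n" and "0 < N"
  shows "poly_mat q (kron (1\<^sub>m N) A) = 0\<^sub>m (N * n) (N * n) \<longleftrightarrow> poly_mat q A = 0\<^sub>m n n"
  using assms by (simp add: poly_mat_kron_one kron_one_eq_zero_iff poly_mat_carrier)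

lemma min_poly_kron_one:
  assumes "A \<in> carrier_mat n n" and "0 < N"
  shows "min_poly (kron (1\<^sub>m N) A) = min_poly A"
  using assms by (simp add: min_poly_def poly_mat_kron_one_eq_zero_iff)

lemma alpha_plus_kron_one:
  assumes "A \<in> carrier_mat n n" and "0 < N"
  shows "alpha_plus (kron (1\<^sub>m N) A) = alpha_plus A"
  using assms by (simp add: alpha_plus_def min_poly_kron_one)

lemma (in semiring_hom) mat_hom_kron: "mat\<^sub>h (kron P Q) = kron (mat\<^sub>h P) (mat\<^sub>h Q)"
  by (intro eq_matI) (auto simp: index_kron block_index_div_mod_less hom_mult)

lemma kron_mult_vec_index:
  fixes P Q :: "'a::comm_semiring_0 mat"
  assumes P: "P \<in> carrier_mat a b" and Q: "Q \<in> carrier_mat c d" and z: "z \<in> carrier_vec (b * d)"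
    and k: "k < a" and r: "r < c"
  shows "(kron P Q *\<^sub>v z) $ (k * c + r) = (\<Sum>l < b. P $$ (k, l) * (Q *\<^sub>v vec_block d l z) $ r)"
proof -
  have kr: "k * c + r < a * c" using block_index_less k r .
  have "(kron P Q *\<^sub>v z) $ (k * c + r) = (\<Sum>s < b * d. kron P Q $$ (k * c + r, s) * z $ s)"
    using kr P Q z by (simp add: scalar_prod_def lessThan_atLeast0)
  also have "\<dots> = (\<Sum>l < b. \<Sum>t < d. P $$ (k, l) * (Q $$ (r, t) * z $ (l * d + t)))"
    unfolding sum_lessThan_mult_blocks
    by (intro sum.cong refl) (use kr P Q r block_index_less in \<open>auto simp: index_kron mult.assoc\<close>)
  also have "\<dots> = (\<Sum>l < b. P $$ (k, l) * (Q *\<^sub>v vec_block d l z) $ r)"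
    using Q r by (simp add: sum_distrib_left scalar_prod_def lessThan_atLeast0)
  finally show ?thesis .
qed

lemma kron_one_mult_vec_block:
  fixes A :: "'a::comm_semiring_1 mat"
  assumes A: "A \<in> carrier_mat n n" and z: "z \<in> carrier_vec (N * n)" and j: "j < N"
  shows "vec_block n j (kron (1\<^sub>m N) A *\<^sub>v z) = A *\<^sub>v vec_block n j z"
proof (rule eq_vecI)
  fix t assume "t < dim_vec (A *\<^sub>v vec_block n j z)"
  hence t: "t < n" using A by simp
  have "(kron (1\<^sub>m N) A *\<^sub>v z) $ (j * n + t)
      = (\<Sum>l < N. 1\<^sub>m N $$ (j, l) * (A *\<^sub>v vec_block n l z) $ t)"
    by (rule kron_mult_vec_index[OF one_carrier_mat A z j t])
  also have "\<dots> = (A *\<^sub>v vec_block n j z) $ t"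
    using j by (simp add: sum.delta if_distrib[of "\<lambda>x. x * _"] cong: if_cong)
  finally show "vec_block n j (kron (1\<^sub>m N) A *\<^sub>v z) $ t = (A *\<^sub>v vec_block n j z) $ t"
    using t by simp
qed (use A in simp)

lemma mult_mat_vec_zero: "M *\<^sub>v 0\<^sub>v k = (0\<^sub>v (dim_row M) :: 'a::semiring_0 vec)"
  by (intro eq_vecI) (auto simp: scalar_prod_def)

lemma zero_mat_mult_vec: "v \<in> carrier_vec b \<Longrightarrow> (0\<^sub>m a b :: 'a::semiring_0 mat) *\<^sub>v v = 0\<^sub>v a"
  by (intro eq_vecI) (auto simp: scalar_prod_def)

lemma append_vec_eq_zero_iff:
  assumes "X \<in> carrier_vec a"
  shows "X @\<^sub>v Y = 0\<^sub>v (a + c) \<longleftrightarrow> X = 0\<^sub>v a \<and> Y = (0\<^sub>v c :: 'a::zero vec)"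
proof -
  have "0\<^sub>v (a + c) = (0\<^sub>v a :: 'a vec) @\<^sub>v 0\<^sub>v c" by (intro eq_vecI) auto
  thus ?thesis using assms by (simp add: append_vec_eq)
qed

lemma vstack_dims [simp]:
  "dim_row (vstack P Q) = dim_row P + dim_row Q" "dim_col (vstack P Q) = dim_col P"
  by (auto simp: vstack_def)

lemma vstack_mult_vec:
  assumes P: "P \<in> carrier_mat a b" and Q: "Q \<in> carrier_mat c b"
  shows "vstack P Q *\<^sub>v z = (P *\<^sub>v z) @\<^sub>v (Q *\<^sub>v z)"
proof (rule eq_vecI)
  fix r assume "r < dim_vec ((P *\<^sub>v z) @\<^sub>v (Q *\<^sub>v z))"
  hence r: "r < a + c" using P Q by simp
  have "row (vstack P Q) r = (if r < a then row P r else row Q (r - a))"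
    using P Q r by (auto simp: vstack_def intro!: eq_vecI)
  thus "(vstack P Q *\<^sub>v z) $ r = ((P *\<^sub>v z) @\<^sub>v (Q *\<^sub>v z)) $ r" using P Q r by auto
qed (use P Q in simp)

lemma dim_col_diag_block_mat_uniform:
  "\<forall>C \<in> set Cs. dim_col C = n \<Longrightarrow> dim_col (diag_block_mat Cs) = length Cs * n"
  by (induction Cs) (auto simp: Let_def)

lemma diag_block_mat_Cons_mult_vec:
  assumes a: "a \<in> carrier_vec (dim_col C)" and d: "d \<in> carrier_vec (dim_col (diag_block_mat Cs))"
  shows "diag_block_mat (C # Cs) *\<^sub>v (a @\<^sub>v d) = (C *\<^sub>v a) @\<^sub>v (diag_block_mat Cs *\<^sub>v d)"
proof -
  let ?D = "diag_block_mat Cs"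
  have "diag_block_mat (C # Cs) *\<^sub>v (a @\<^sub>v d)
      = four_block_mat C (0\<^sub>m (dim_row C) (dim_col ?D)) (0\<^sub>m (dim_row ?D) (dim_col C)) ?D
          *\<^sub>v (a @\<^sub>v d)"
    by (simp add: Let_def)
  also have "\<dots> = (C *\<^sub>v a + 0\<^sub>m (dim_row C) (dim_col ?D) *\<^sub>v d)
      @\<^sub>v (0\<^sub>m (dim_row ?D) (dim_col C) *\<^sub>v a + ?D *\<^sub>v d)"
    by (rule four_block_mat_mult_vec) (use a d in auto)
  also have "\<dots> = (C *\<^sub>v a) @\<^sub>v (?D *\<^sub>v d)"
    using right_zero_vec[of "C *\<^sub>v a" "dim_row C"] left_zero_vec[of "?D *\<^sub>v d" "dim_row ?D"]
    by (simp add: zero_mat_mult_vec a d carrier_vecI)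
  finally show ?thesis .
qed

lemma diag_block_mat_mult_vec_eq_zeroD:
  assumes "\<forall>C \<in> set Cs. dim_col C = n" and "z \<in> carrier_vec (length Cs * n)"
    and "diag_block_mat Cs *\<^sub>v z = 0\<^sub>v (dim_row (diag_block_mat Cs))" and "j < length Cs"
  shows "Cs ! j *\<^sub>v vec_block n j z = 0\<^sub>v (dim_row (Cs ! j))"
  using assms
proof (induction Cs arbitrary: z j)
  case (Cons C Cs)
  let ?D = "diag_block_mat Cs"
  have C: "dim_col C = n" and cD: "dim_col ?D = length Cs * n"
    using Cons.prems(1) by (auto intro: dim_col_diag_block_mat_uniform)
  define a where "a = vec_first z n"
  define d where "d = vec_last z (length Cs * n)"
  have a: "a \<in> carrier_vec n" and d: "d \<in> carrier_vec (length Cs * n)" and z: "z = a @\<^sub>v d"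
    using Cons.prems(2) by (auto simp: a_def d_def)
  have "diag_block_mat (C # Cs) *\<^sub>v z = (C *\<^sub>v a) @\<^sub>v (?D *\<^sub>v d)"
    unfolding z by (rule diag_block_mat_Cons_mult_vec) (use a d C cD in auto)
  moreover have "dim_row (diag_block_mat (C # Cs)) = dim_row C + dim_row ?D"
    by (simp add: dim_diag_block_mat)
  ultimately have "(C *\<^sub>v a) @\<^sub>v (?D *\<^sub>v d) = 0\<^sub>v (dim_row C + dim_row ?D)"
    using Cons.prems(3) by simp
  hence Ca: "C *\<^sub>v a = 0\<^sub>v (dim_row C)" and Dd: "?D *\<^sub>v d = 0\<^sub>v (dim_row ?D)"
    by (simp_all only: append_vec_eq_zero_iff[OF carrier_vecI[OF dim_mult_mat_vec]])
  show ?case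
  proof (cases j)
    case 0
    then show ?thesis using Ca a z by (simp add: vec_block_append_0)
  next
    case (Suc j')
    then show ?thesis
      using Cons.IH[OF _ d Dd] Cons.prems(1,4) a d z by (simp add: vec_block_append_Suc)
  qed
qed simp

lemma laplacian_carrier_mat: "laplacian N E \<in> carrier_mat N N"
  unfolding laplacian_def adjacency_def by (intro carrier_matI) auto

lemma laplacian_row_sum:
  assumes k: "k < N"
  shows "(\<Sum>l < N. laplacian N E $$ (k, l) * w l) =
    real (in_degree N E k) * w k - (\<Sum>l \<in> {l \<in> {0..<N}. (l, k) \<in> E}. w l)"
proof -
  have "(\<Sum>l < N. laplacian N E $$ (k, l) * w l) =
     (\<Sum>l < N. (if k = l then real (in_degree N E k) * w l else 0)
        - (if (l, k) \<in> E then w l else 0))"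
    using k by (intro sum.cong refl) (auto simp: laplacian_def adjacency_def left_diff_distrib)
  also have "\<dots> = real (in_degree N E k) * w k - (\<Sum>l < N. if (l, k) \<in> E then w l else 0)"
    using k by (simp add: sum_subtractf sum.delta)
  also have "(\<Sum>l < N. if (l, k) \<in> E then w l else 0) = (\<Sum>l \<in> {l \<in> {0..<N}. (l, k) \<in> E}. w l)"
    unfolding lessThan_atLeast0 by (rule sum.inter_filter[symmetric]) simp
  finally show ?thesis .
qed

lemma sum_eq_card_mult_bound_imp_eq:
  fixes w :: "'a \<Rightarrow> 'b::linordered_idom"
  assumes P: "finite P" and bound: "\<forall>l \<in> P. w l \<le> M" and sum: "(\<Sum>l \<in> P. w l) = of_nat (card P) * M"
    and l: "l \<in> P"
  shows "w l = M"
proof -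
  have "(\<Sum>l \<in> P. M - w l) = 0" using sum by (simp add: sum_subtractf)
  hence "\<forall>l \<in> P. M - w l = 0" using P bound by (subst sum_nonneg_eq_0_iff[symmetric]) auto
  thus ?thesis using l by simp
qed

text \<open>Maximum principle: where w attains its maximum, so do all in-neighbours, because w is their
  mean there; following the tree backwards the maximum reaches the root.\<close>

lemma spanning_tree_root_max:
  fixes w :: "nat \<Rightarrow> real"
  assumes E: "E \<subseteq> {0..<N} \<times> {0..<N}" and tree: "has_spanning_tree N E i"
    and harmonic: "\<And>k. k < N \<Longrightarrow> real (in_degree N E k) * w k = (\<Sum>l \<in> {l \<in> {0..<N}. (l, k) \<in> E}. w l)"
    and k: "k < N"
  shows "w k \<le> w i"
proof -
  obtain T where i: "i < N" and TE: "T \<subseteq> E" and reach: "\<forall>k < N. (i, k) \<in> T\<^sup>*"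
    using tree unfolding has_spanning_tree_def by blast
  define M where "M = Max (w ` {0..<N})"
  have le_M: "w k \<le> M" if "k < N" for k
    unfolding M_def using that by (intro Max_ge) auto
  have "M \<in> w ` {0..<N}"
    unfolding M_def using i by (intro Max_in) auto
  then obtain k0 where k0: "k0 < N" "w k0 = M" by auto
  have in_neighbour_max: "w l = M" if z: "z < N" "w z = M" and lz: "(l, z) \<in> E" for z l
  proof (rule sum_eq_card_mult_bound_imp_eq[where P = "{l \<in> {0..<N}. (l, z) \<in> E}"])
    show "(\<Sum>l \<in> {l \<in> {0..<N}. (l, z) \<in> E}. w l) = real (card {l \<in> {0..<N}. (l, z) \<in> E}) * M"
      using harmonic[OF z(1)] z(2) by (simp add: in_degree_def)
    show "l \<in> {l \<in> {0..<N}. (l, z) \<in> E}" using lz E by auto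
  qed (use le_M in auto)
  have "w i = M" if "(i, z) \<in> T\<^sup>*" "z < N" "w z = M" for z
    using that
  proof (induction rule: rtrancl_induct)
    case (step y z)
    have yz: "(y, z) \<in> E" using step.hyps(2) TE by auto
    hence "y < N" using E by auto
    moreover have "w y = M" using in_neighbour_max[OF step.prems yz] .
    ultimately show ?case using step.IH by blast
  qed
  thus ?thesis using reach k0 le_M k by simp
qed

lemma laplacian_kernel_constant:
  fixes w :: "nat \<Rightarrow> real"
  assumes E: "E \<subseteq> {0..<N} \<times> {0..<N}" and tree: "has_spanning_tree N E i"
    and kernel: "\<And>k. k < N \<Longrightarrow> (\<Sum>l < N. laplacian N E $$ (k, l) * w l) = 0"
    and k: "k < N"
  shows "w k = w i"
proof -
  have harmonic: "real (in_degree N E k) * w k = (\<Sum>l \<in> {l \<in> {0..<N}. (l, k) \<in> E}. w l)"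
    if "k < N" for k
    using kernel[OF that] by (simp add: laplacian_row_sum[OF that])
  have "w k \<le> w i"
    by (rule spanning_tree_root_max[OF E tree harmonic k])
  moreover have "- w k \<le> - w i"
    by (rule spanning_tree_root_max[OF E tree _ k]) (simp add: harmonic sum_negf)
  ultimately show ?thesis by simp
qed

lemma zero_mem_undetectable_subspace:
  assumes F: "F \<in> carrier_mat n n" shows "0\<^sub>v n \<in> undetectable_subspace G F"
proof -
  have "dim_row (poly_mat q (map_mat complex_of_real F)) = n" for q
    using poly_mat_carrier[of "map_mat complex_of_real F" n] F by auto
  thus ?thesis
    using F by (auto simp: undetectable_subspace_def mult_mat_vec_zero of_real_hom.vec_hom_zero)
qed

lemma undetectable_kron_one_output:
  assumes A: "A \<in> carrier_mat n n" and G: "G \<in> carrier_mat q (N * n)"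
    and x: "x \<in> undetectable_subspace G (kron (1\<^sub>m N) A)" and m: "m < n" and N: "0 < N"
  shows "G *\<^sub>v (kron (1\<^sub>m N) (A ^\<^sub>m m) *\<^sub>v x) = 0\<^sub>v q"
proof -
  have F: "kron (1\<^sub>m N) A \<in> carrier_mat (N * n) (N * n)" using A by auto
  have "n \<le> N * n" using mult_le_mono1[of 1 N n] N by simp
  hence "Suc m \<le> N * n" using m by linarith
  moreover have xc: "x \<in> carrier_vec (N * n)"
    and "\<forall>l \<in> {1..N * n}. (G * kron (1\<^sub>m N) A ^\<^sub>m (l - 1)) *\<^sub>v x = 0\<^sub>v q"
    using x G F A unfolding undetectable_subspace_def by auto
  ultimately have "(G * kron (1\<^sub>m N) A ^\<^sub>m m) *\<^sub>v x = 0\<^sub>v q"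
    by (metis atLeastAtMost_iff diff_Suc_1 le_add1 plus_1_eq_Suc)
  thus ?thesis
    using assoc_mult_mat_vec[OF G kron_carrier_mat[OF one_carrier_mat pow_carrier_mat[OF A]] xc]
    by (simp add: kron_pow_mat[OF one_carrier_mat A])
qed

lemma undetectable_kron_one_block_alpha:
  assumes A: "A \<in> carrier_mat n n" and x: "x \<in> undetectable_subspace G (kron (1\<^sub>m N) A)"
    and j: "j < N"
  shows "poly_mat (alpha_plus A) (map_mat complex_of_real A)
      *\<^sub>v map_vec complex_of_real (vec_block n j x) = 0\<^sub>v n"
proof -
  let ?P = "poly_mat (alpha_plus A) (map_mat complex_of_real A)"
  have AC: "map_mat complex_of_real A \<in> carrier_mat n n" using A by simp
  have F: "kron (1\<^sub>m N) A \<in> carrier_mat (N * n) (N * n)" using A by auto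
  have xc: "x \<in> carrier_vec (N * n)" and
    "poly_mat (alpha_plus (kron (1\<^sub>m N) A)) (map_mat complex_of_real (kron (1\<^sub>m N) A))
       *\<^sub>v map_vec complex_of_real x = 0\<^sub>v (N * n)"
    using x F A unfolding undetectable_subspace_def by auto
  hence "kron (1\<^sub>m N) ?P *\<^sub>v map_vec complex_of_real x = 0\<^sub>v (N * n)"
    using A j by (simp add: alpha_plus_kron_one of_real_hom.mat_hom_kron of_real_hom.mat_hom_one
        poly_mat_kron_one[OF AC])
  hence "vec_block n j (kron (1\<^sub>m N) ?P *\<^sub>v map_vec complex_of_real x) = 0\<^sub>v n"
    using j by (simp add: vec_block_zero)
  thus ?thesis
    using xc j by (simp add: kron_one_mult_vec_block[OF poly_mat_carrier[OF AC]] vec_block_map_vec)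
qed

lemma undetectable_stacked_outputs:
  fixes A H L :: "real mat" and Cs :: "real mat list"
  assumes A: "A \<in> carrier_mat n n" and H: "H \<in> carrier_mat p n" and L: "L \<in> carrier_mat N N"
    and Cs: "\<forall>C \<in> set Cs. dim_col C = n" "length Cs = N"
    and x: "x \<in> undetectable_subspace (vstack (diag_block_mat Cs) (kron L H)) (kron (1\<^sub>m N) A)"
    and m: "m < n" and N: "0 < N"
  shows "diag_block_mat Cs *\<^sub>v (kron (1\<^sub>m N) (A ^\<^sub>m m) *\<^sub>v x) = 0\<^sub>v (dim_row (diag_block_mat Cs))"
    and "kron L H *\<^sub>v (kron (1\<^sub>m N) (A ^\<^sub>m m) *\<^sub>v x) = 0\<^sub>v (N * p)"
proof -
  let ?D = "diag_block_mat Cs" and ?z = "kron (1\<^sub>m N) (A ^\<^sub>m m) *\<^sub>v x"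
  have cD: "dim_col ?D = N * n"
    using dim_col_diag_block_mat_uniform[OF Cs(1)] Cs(2) by simp
  note D = carrier_matI[OF refl cD]
  have K: "kron L H \<in> carrier_mat (N * p) (N * n)" using L H by (rule kron_carrier_mat)
  have "vstack ?D (kron L H) \<in> carrier_mat (dim_row ?D + N * p) (N * n)"
    using L H cD by (intro carrier_matI) simp_all
  from undetectable_kron_one_output[OF A this x m N]
  have "(?D *\<^sub>v ?z) @\<^sub>v (kron L H *\<^sub>v ?z) = 0\<^sub>v (dim_row ?D + N * p)"
    unfolding vstack_mult_vec[OF D K] .
  thus "?D *\<^sub>v ?z = 0\<^sub>v (dim_row ?D)" and "kron L H *\<^sub>v ?z = 0\<^sub>v (N * p)"
    by (simp_all only: append_vec_eq_zero_iff[OF carrier_vecI[OF dim_mult_mat_vec]])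
qed

lemma undetectable_stacked_block:
  fixes A H L :: "real mat" and Cs :: "real mat list"
  assumes A: "A \<in> carrier_mat n n" and H: "H \<in> carrier_mat p n" and L: "L \<in> carrier_mat N N"
    and Cs: "\<forall>C \<in> set Cs. dim_col C = n" "length Cs = N"
    and x: "x \<in> undetectable_subspace (vstack (diag_block_mat Cs) (kron L H)) (kron (1\<^sub>m N) A)"
    and j: "j < N"
  shows "vec_block n j x \<in> undetectable_subspace (Cs ! j) A"
proof -
  have N: "0 < N" using j by simp
  have xc: "x \<in> carrier_vec (N * n)" using x A unfolding undetectable_subspace_def by auto
  have "dim_col (Cs ! j) = n" using Cs j by simp
  note C = carrier_matI[OF refl this]
  have "(Cs ! j * A ^\<^sub>m m) *\<^sub>v vec_block n j x = 0\<^sub>v (dim_row (Cs ! j))" if m: "m < n" for m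
  proof -
    have "Cs ! j *\<^sub>v vec_block n j (kron (1\<^sub>m N) (A ^\<^sub>m m) *\<^sub>v x) = 0\<^sub>v (dim_row (Cs ! j))"
      using undetectable_stacked_outputs(1)[OF A H L Cs x m N] Cs j
        mult_mat_vec_carrier[OF kron_carrier_mat[OF one_carrier_mat pow_carrier_mat[OF A]] xc]
      by (intro diag_block_mat_mult_vec_eq_zeroD[OF Cs(1)]) auto
    thus ?thesis
      using assoc_mult_mat_vec[OF C pow_carrier_mat[OF A] vec_block_carrier(1)]
      by (simp add: kron_one_mult_vec_block[OF pow_carrier_mat[OF A] xc j])
  qed
  hence "\<forall>l \<in> {1..n}. (Cs ! j * A ^\<^sub>m (l - 1)) *\<^sub>v vec_block n j x = 0\<^sub>v (dim_row (Cs ! j))"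
    by auto
  thus ?thesis
    using undetectable_kron_one_block_alpha[OF A x j] A unfolding undetectable_subspace_def by auto
qed

lemma undetectable_stacked_coupling:
  fixes A H L :: "real mat" and Cs :: "real mat list"
  assumes A: "A \<in> carrier_mat n n" and H: "H \<in> carrier_mat p n" and L: "L \<in> carrier_mat N N"
    and Cs: "\<forall>C \<in> set Cs. dim_col C = n" "length Cs = N"
    and x: "x \<in> undetectable_subspace (vstack (diag_block_mat Cs) (kron L H)) (kron (1\<^sub>m N) A)"
    and m: "m < n" and k: "k < N" and r: "r < p"
  shows "(\<Sum>l < N. L $$ (k, l) * ((H * A ^\<^sub>m m) *\<^sub>v vec_block n l x) $ r) = 0"
proof -
  let ?z = "kron (1\<^sub>m N) (A ^\<^sub>m m) *\<^sub>v x"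
  have N: "0 < N" using k by simp
  have xc: "x \<in> carrier_vec (N * n)" using x A unfolding undetectable_subspace_def by auto
  have "(\<Sum>l < N. L $$ (k, l) * ((H * A ^\<^sub>m m) *\<^sub>v vec_block n l x) $ r)
      = (\<Sum>l < N. L $$ (k, l) * (H *\<^sub>v vec_block n l ?z) $ r)"
    using xc by (intro sum.cong refl)
      (simp add: kron_one_mult_vec_block[OF pow_carrier_mat[OF A]]
        assoc_mult_mat_vec[OF H pow_carrier_mat[OF A]])
  also have "\<dots> = (kron L H *\<^sub>v ?z) $ (k * p + r)"
    by (rule kron_mult_vec_index[OF L H _ k r, symmetric])
      (rule mult_mat_vec_carrier[OF kron_carrier_mat[OF one_carrier_mat pow_carrier_mat[OF A]] xc])
  also have "\<dots> = 0"
    using undetectable_stacked_outputs(2)[OF A H L Cs x m N] block_index_less[OF k r] by simp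
  finally show ?thesis .
qed

lemma undetectable_stacked_laplacian_block_unobservable:
  fixes A H :: "real mat" and Cs :: "real mat list"
  assumes A: "A \<in> carrier_mat n n" and H: "H \<in> carrier_mat p n"
    and Cs: "\<forall>C \<in> set Cs. dim_col C = n" "length Cs = N"
    and E: "E \<subseteq> {0..<N} \<times> {0..<N}" and tree: "has_spanning_tree N E i"
    and x: "x \<in> undetectable_subspace (vstack (diag_block_mat Cs) (kron (laplacian N E) H))
      (kron (1\<^sub>m N) A)"
    and root: "vec_block n i x = 0\<^sub>v n" and l: "l < N"
  shows "vec_block n l x \<in> unobservable_subspace H A"
proof -
  have "((H * A ^\<^sub>m m) *\<^sub>v vec_block n l x) $ r = 0" if m: "m < n" and r: "r < p" for m r
    using laplacian_kernel_constant[OF E tree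
        undetectable_stacked_coupling[OF A H laplacian_carrier_mat Cs x m _ r] l]
      root r H by (simp add: mult_mat_vec_zero)
  thus ?thesis
    using A H unfolding unobservable_subspace_def by (auto intro!: eq_vecI)
qed

theorem corollary2:
  fixes N n p :: nat and A H :: "real mat" and Cs :: "real mat list"
    and E :: "(nat \<times> nat) set" and i :: nat
  assumes "A \<in> carrier_mat n n"
    and "length Cs = N"
    and "\<forall>j < N. dim_col (Cs ! j) = n"
    and "H \<in> carrier_mat p n"
    and "E \<subseteq> {0..<N} \<times> {0..<N}"
    and "\<forall>k. (k, k) \<notin> E"
    and "has_spanning_tree N E i"
    and "detectable (Cs ! i) A"
    and "\<forall>j < N. unobservable_subspace H A \<inter> undetectable_subspace (Cs ! j) A = {0\<^sub>v n}"
  shows "detectable (vstack (diag_block_mat Cs) (kron (laplacian N E) H)) (kron (1\<^sub>m N) A)"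
proof -
  note A = assms(1) and H = assms(4) and E = assms(5) and tree = assms(7)
  have i: "i < N" using tree by (simp add: has_spanning_tree_def)
  have Cs: "\<forall>C \<in> set Cs. dim_col C = n" "length Cs = N"
    using assms(2,3) by (auto simp: in_set_conv_nth)
  have "undetectable_subspace (vstack (diag_block_mat Cs) (kron (laplacian N E) H)) (kron (1\<^sub>m N) A)
      \<subseteq> {0\<^sub>v (N * n)}"
  proof
    fix x assume x: "x \<in> undetectable_subspace (vstack (diag_block_mat Cs) (kron (laplacian N E) H))
      (kron (1\<^sub>m N) A)"
    note undetectable_block = undetectable_stacked_block[OF A H laplacian_carrier_mat Cs x]
    have root_block: "vec_block n i x = 0\<^sub>v n"
      using undetectable_block[OF i] assms(8) A by (auto simp: detectable_def)
    have "vec_block n l x = 0\<^sub>v n" if "l < N" for l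
      using assms(9) that undetectable_block[OF that]
        undetectable_stacked_laplacian_block_unobservable[OF A H Cs E tree x root_block that]
      by blast
    moreover have "x \<in> carrier_vec (N * n)"
      using x A by (simp add: undetectable_subspace_def)
    ultimately show "x \<in> {0\<^sub>v (N * n)}"
      using vec_eq_zero_by_blocks by blast
  qed
  moreover have "0\<^sub>v (N * n) \<in> undetectable_subspace
      (vstack (diag_block_mat Cs) (kron (laplacian N E) H)) (kron (1\<^sub>m N) A)"
    using A by (intro zero_mem_undetectable_subspace) auto
  ultimately show ?thesis
    using A by (auto simp: detectable_def)
qed

end
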